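(* For every $d\ge1$, the simplex $S_d=\mathrm{conv}\{-\mathbf{1},e_1,\dots,e_d\}\subset\mathbb{R}^d$, where $\mathbf{1}=e_1+\dots+e_d$ is the all-ones vector and $e_i$ are the standard basis vectors, is simultaneously lattice reduced and lattice complete with respect to $\mathbb{Z}^d$.
   Context: For a lattice $\Gamma\subset\mathbb{R}^d$ with dual $\Gamma^\star=\{y:x\cdot y\in\mathbb{Z}\ \forall x\in\Gamma\}$ (for $\Gamma=\mathbb{Z}^d$, $\Gamma^\star=\mathbb{Z}^d$) and a convex body $K$: $\mathrm{wdt}_\Gamma(K)=\min_{y\in\Gamma^\star\setminus\{0\}}\max_{a,b\in K}y\cdot(a-b)$; a segment $[a,b]$ is a lattice segment if $b-a$ is parallel to a nonzero vector of $\Gamma$, with lattice length $|b-a|/|v|$ where $v$ generates $\Gamma\cap\mathrm{span}\{b-a\}$ and is a positive multiple of $b-a$; $\mathrm{diam}_\Gamma(K)$ is the maximum lattice length of a lattice segment in $K$. $K$ is lattice reduced if no convex body $K'\subsetneq K$ has the same lattice width, and lattice complete if no convex body $K'\supsetneq K$ has the same lattice diameter. *)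

theory Defs
  imports "HOL-Analysis.Analysis"
begin

text \<open>Everything is with respect to the lattice Gamma = Z^d, realised in real^'n
  (d = CARD('n)); its dual lattice is again Z^d.\<close>

definition int_vec :: "real^'n \<Rightarrow> bool" where
  "int_vec x \<longleftrightarrow> (\<forall>i. x $ i \<in> \<int>)"

definition convex_body :: "(real^'n) set \<Rightarrow> bool" where
  "convex_body K \<longleftrightarrow> convex K \<and> compact K \<and> interior K \<noteq> {}"

definition lattice_width :: "(real^'n) set \<Rightarrow> real" where
  "lattice_width K =
     Inf ((\<lambda>y. Sup {y \<bullet> (a - b) | a b. a \<in> K \<and> b \<in> K}) ` {y. int_vec y \<and> y \<noteq> 0})"

definition lattice_segment :: "real^'n \<Rightarrow> real^'n \<Rightarrow> bool" where
  "lattice_segment a b \<longleftrightarrow> a \<noteq> b \<and> (\<exists>v. int_vec v \<and> v \<noteq> 0 \<and> (\<exists>c::real. b - a = c *\<^sub>R v))"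

definition seg_generator :: "real^'n \<Rightarrow> real^'n \<Rightarrow> real^'n \<Rightarrow> bool" where
  "seg_generator a b v \<longleftrightarrow> int_vec v \<and> (\<exists>t>0. v = t *\<^sub>R (b - a)) \<and>
     (\<forall>w. int_vec w \<and> w \<in> span {b - a} \<longrightarrow> (\<exists>k::int. w = of_int k *\<^sub>R v))"

definition lattice_length :: "real^'n \<Rightarrow> real^'n \<Rightarrow> real" where
  "lattice_length a b = norm (b - a) / norm (THE v. seg_generator a b v)"

definition lattice_diam :: "(real^'n) set \<Rightarrow> real" where
  "lattice_diam K = Sup {lattice_length a b | a b. a \<in> K \<and> b \<in> K \<and> lattice_segment a b}"

definition lattice_reduced :: "(real^'n) set \<Rightarrow> bool" where
  "lattice_reduced K \<longleftrightarrow> convex_body K \<and>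
     (\<forall>K'. convex_body K' \<and> K' \<subset> K \<longrightarrow> lattice_width K' \<noteq> lattice_width K)"

definition lattice_complete :: "(real^'n) set \<Rightarrow> bool" where
  "lattice_complete K \<longleftrightarrow> convex_body K \<and>
     (\<forall>K'. convex_body K' \<and> K \<subset> K' \<longrightarrow> lattice_diam K' \<noteq> lattice_diam K)"

definition simplex_S :: "(real^'n) set" where
  "simplex_S = convex hull (insert (- (\<chi> i. 1)) (range (\<lambda>i. axis i 1)))"

end

theory Submission
  imports Defs
begin

text \<open>
  Write \<open>\<lambda>\<^sub>0, \<dots>, \<lambda>\<^sub>d\<close> for the barycentric coordinates with respect to the vertices
  \<open>v\<^sub>0 = -1, v\<^sub>i = e\<^sub>i\<close> of \<open>S\<^sub>d\<close>.

  Reduced: an integer functional \<open>y \<noteq> 0\<close> takes integer values on the vertices which sum to \<open>0\<close>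
  (as \<open>\<Sum> v\<^sub>j = 0\<close>) and are not all \<open>0\<close>, so its width on \<open>S\<^sub>d\<close> is at least \<open>2\<close>.  A proper convex
  subbody misses a vertex, and then its width in some direction \<open>e\<^sub>i\<close> is below \<open>2\<close>, since
  \<open>x\<^sub>i = \<lambda>\<^sub>i - \<lambda>\<^sub>0\<close> reaches \<open>\<plusminus>1\<close> only at \<open>e\<^sub>i\<close> and \<open>-1\<close>.

  Complete: moving along a lattice vector \<open>g \<noteq> 0\<close> changes \<open>\<lambda>\<close> by \<open>W / (d + 1)\<close>, where
  \<open>W \<in> \<int>\<^sup>d\<^sup>+\<^sup>1\<close> is nonzero, has zero sum and entries congruent modulo \<open>d + 1\<close>; such a vector has
  negative part of total mass at least \<open>d\<close>.  Hence a chord \<open>[a, a + c g]\<close> of \<open>S\<^sub>d\<close> has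
  \<open>c d \<le> d + 1\<close>, i.e. the lattice diameter is at most \<open>(d + 1) / d\<close>.  Conversely, a convex body
  \<open>K \<supset> S\<^sub>d\<close> contains a point beyond some facet, so it contains \<open>-\<tau> v\<^sub>j\<close> for some \<open>\<tau> > 1 / d\<close>,
  and the segment from there to \<open>v\<^sub>j\<close> has lattice length \<open>1 + \<tau> > (d + 1) / d\<close>.
\<close>

section \<open>Lattice segments and their lattice length\<close>

lemma int_vec_diff: "int_vec x \<Longrightarrow> int_vec y \<Longrightarrow> int_vec (x - y)"
  unfolding int_vec_def by (simp add: Ints_diff)

lemma int_vec_of_int_scaleR: "int_vec x \<Longrightarrow> int_vec (of_int k *\<^sub>R x)"
  unfolding int_vec_def by simp

lemma int_vec_axis: "int_vec (axis i 1 :: real^'n)"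
  unfolding int_vec_def axis_def by simp

lemma norm_ge_1_if_int_vec:
  assumes "int_vec (g :: real^'n)" "g \<noteq> 0"
  shows "1 \<le> norm g"
proof -
  obtain i where "g $ i \<noteq> 0"
    using assms(2) by (auto simp: vec_eq_iff)
  with assms(1) have "1 \<le> \<bar>g $ i\<bar>"
    unfolding int_vec_def by (intro Ints_nonzero_abs_ge1) auto
  then show ?thesis
    using component_le_norm_cart[of g i] by linarith
qed

lemma least_positive_dvd:
  fixes M :: "int set"
  assumes closed: "\<And>x y k. x \<in> M \<Longrightarrow> y \<in> M \<Longrightarrow> x - k * y \<in> M"
    and "n \<in> M" "0 < n" and least: "\<And>m. m \<in> M \<Longrightarrow> 0 < m \<Longrightarrow> n \<le> m"
    and "m \<in> M"
  shows "n dvd m"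
proof -
  have "m mod n \<in> M"
    using closed[OF \<open>m \<in> M\<close> \<open>n \<in> M\<close>, of "m div n"] by (simp add: minus_div_mult_eq_mod)
  moreover have "0 \<le> m mod n" "m mod n < n"
    using \<open>0 < n\<close> by simp_all
  ultimately have "m mod n = 0"
    using least by force
  then show ?thesis by auto
qed

lemma seg_generator_unique:
  assumes g: "seg_generator a b g" and g': "seg_generator a b g'"
  shows "g = g'"
proof -
  obtain t t' where "t > 0" "t' > 0" and gt: "g = t *\<^sub>R (b - a)" and gt': "g' = t' *\<^sub>R (b - a)"
    using g g' unfolding seg_generator_def by blast
  show ?thesis
  proof (cases "a = b")
    case False
    have "g \<in> span {b - a}" "g' \<in> span {b - a}"
      using gt gt' by (simp_all add: span_mul span_base)
    then obtain k k' :: int where k: "g' = of_int k *\<^sub>R g" and k': "g = of_int k' *\<^sub>R g'"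
      using g g' unfolding seg_generator_def by blast
    have "t' = of_int k * t" "t = of_int k' * t'"
      using k k' False unfolding gt gt' by (simp_all add: scaleR_cancel_right)
    then have "of_int k' * of_int k * t = t"
      by algebra
    with \<open>t > 0\<close> have "of_int k' * of_int k = (1::real)"
      by simp
    then have "k' * k = 1"
      by (metis of_int_1 of_int_eq_iff of_int_mult)
    moreover have "k > 0"
      using \<open>t' = of_int k * t\<close> \<open>t > 0\<close> \<open>t' > 0\<close> by (simp add: zero_less_mult_iff)
    ultimately have "k = 1"
      by (metis mult.commute pos_zmult_eq_1_iff)
    then show ?thesis using k by simp
  qed (use gt gt' in simp)
qed

lemma lattice_length_eq:
  assumes "seg_generator a b g" "a \<noteq> b" "b - a = L *\<^sub>R g"
  shows "lattice_length a b = L"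
proof -
  obtain t where "t > 0" "g = t *\<^sub>R (b - a)"
    using assms(1) unfolding seg_generator_def by blast
  with assms(3) have "(L * t) *\<^sub>R (b - a) = 1 *\<^sub>R (b - a)"
    by simp
  with assms(2) have "L * t = 1"
    by (simp only: scaleR_cancel_right) simp
  then have "L = 1 / t"
    using \<open>t > 0\<close> by (simp add: field_simps)
  then have "L > 0"
    using \<open>t > 0\<close> by simp
  moreover have "g \<noteq> 0"
    using \<open>t > 0\<close> \<open>g = t *\<^sub>R (b - a)\<close> assms(2) by simp
  moreover have "(THE v. seg_generator a b v) = g"
    using assms(1) seg_generator_unique by blast
  ultimately show ?thesis
    unfolding lattice_length_def using assms(3) by simp
qed

lemma int_multiple_if_unit_component:
  fixes e w :: "real^'n"
  assumes "int_vec w" "w \<in> span {e}" "\<bar>e $ i\<bar> = 1"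
  shows "\<exists>m::int. w = of_int m *\<^sub>R e"
proof -
  obtain t where t: "w = t *\<^sub>R e"
    using assms(2) by (auto simp: span_singleton)
  then have "e $ i * w $ i = t * (e $ i * e $ i)"
    by (simp add: algebra_simps)
  moreover have "e $ i * e $ i = 1"
    using abs_mult_self_eq[of "e $ i"] assms(3) by simp
  ultimately have "t = e $ i * w $ i"
    by (metis mult_1_right)
  moreover have "e $ i \<in> \<int>"
    using assms(3) by (cases "e $ i \<ge> 0") (simp_all add: abs_if Ints_minus split: if_splits)
  ultimately have "t \<in> \<int>"
    using assms(1) unfolding int_vec_def by simp
  then show ?thesis
    using t by (auto elim: Ints_cases)
qed

text \<open>The witness is the least positive \<open>n\<close> with \<open>n e\<close> integral.\<close>
lemma lattice_line_generator:
  fixes e v :: "real^'n"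
  assumes unit: "\<bar>e $ i\<bar> = 1" and "int_vec v" "v \<in> span {e}" "v \<noteq> 0"
  shows "\<exists>n::nat. 0 < n \<and> int_vec (real n *\<^sub>R e) \<and>
    (\<forall>w. int_vec w \<and> w \<in> span {e} \<longrightarrow> (\<exists>k::int. w = of_int k *\<^sub>R (real n *\<^sub>R e)))"
proof -
  define M where "M = {m::int. int_vec (of_int m *\<^sub>R e)}"
  have line: "\<exists>m\<in>M. w = of_int m *\<^sub>R e" if "int_vec w" "w \<in> span {e}" for w
    using int_multiple_if_unit_component[OF that unit] that(1) unfolding M_def by auto
  have M_closed: "x - k * y \<in> M" if "x \<in> M" "y \<in> M" for x y k
  proof -
    have "int_vec (of_int x *\<^sub>R e - of_int k *\<^sub>R (of_int y *\<^sub>R e))"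
      using that unfolding M_def by (intro int_vec_diff int_vec_of_int_scaleR[of "of_int y *\<^sub>R e"]) auto
    then show ?thesis
      unfolding M_def by (simp add: algebra_simps)
  qed
  obtain m where "m \<in> M" "v = of_int m *\<^sub>R e"
    using line \<open>int_vec v\<close> \<open>v \<in> span {e}\<close> by blast
  then have "m \<noteq> 0"
    using \<open>v \<noteq> 0\<close> by auto
  have "0 \<in> M" "- m \<in> M"
    using M_closed[of m m 1] M_closed[of 0 m 1] \<open>m \<in> M\<close> by simp_all
  then have ex: "\<exists>n::nat. 0 < n \<and> int n \<in> M"
    using \<open>m \<in> M\<close> \<open>m \<noteq> 0\<close> by (intro exI[of _ "nat \<bar>m\<bar>"]) (auto simp: abs_if)
  define n where "n = (LEAST n::nat. 0 < n \<and> int n \<in> M)"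
  have n: "0 < n" "int n \<in> M"
    using LeastI_ex[OF ex] unfolding n_def by auto
  have least: "int n \<le> m'" if "m' \<in> M" "0 < m'" for m'
    using Least_le[of "\<lambda>n. 0 < n \<and> int n \<in> M" "nat m'"] that unfolding n_def by simp
  have "\<exists>k::int. w = of_int k *\<^sub>R (real n *\<^sub>R e)" if w: "int_vec w" "w \<in> span {e}" for w
  proof -
    obtain m where "m \<in> M" "w = of_int m *\<^sub>R e"
      using line[OF w] by blast
    moreover have "int n dvd m"
      using least_positive_dvd[OF M_closed n(2) _ least \<open>m \<in> M\<close>] n(1) by simp
    ultimately show ?thesis
      by (auto elim!: dvdE)
  qed
  with n show ?thesis
    unfolding M_def by auto
qed

lemma seg_generator_exists:
  assumes "lattice_segment a (b :: real^'n)"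
  shows "\<exists>g. seg_generator a b g"
proof -
  obtain v c where "a \<noteq> b" "int_vec v" "v \<noteq> 0" and v: "b - a = c *\<^sub>R v"
    using assms unfolding lattice_segment_def by blast
  from \<open>a \<noteq> b\<close> obtain i where "(b - a) $ i \<noteq> 0"
    by (metis eq_iff_diff_eq_0 vec_eq_iff zero_index)
  define e where "e = (1 / \<bar>(b - a) $ i\<bar>) *\<^sub>R (b - a)"
  have "\<bar>e $ i\<bar> = 1"
    using \<open>(b - a) $ i \<noteq> 0\<close> by (simp add: e_def abs_mult)
  have span_e: "w \<in> span {e}" if w: "w \<in> span {b - a}" for w
  proof -
    obtain k where "w = k *\<^sub>R (b - a)"
      using w by (auto simp: span_singleton)
    then have "w = (k * \<bar>(b - a) $ i\<bar>) *\<^sub>R e"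
      using \<open>(b - a) $ i \<noteq> 0\<close> by (simp add: e_def)
    then show ?thesis
      by (simp add: span_base span_scale)
  qed
  have "c \<noteq> 0"
    using v \<open>a \<noteq> b\<close> by auto
  then have "v = (1 / c) *\<^sub>R (b - a)"
    using v by simp
  then have "v \<in> span {b - a}"
    by (simp add: span_base span_scale)
  then obtain n :: nat where "0 < n" "int_vec (real n *\<^sub>R e)"
    and gen: "\<forall>w. int_vec w \<and> w \<in> span {e} \<longrightarrow> (\<exists>k::int. w = of_int k *\<^sub>R (real n *\<^sub>R e))"
    using lattice_line_generator[OF \<open>\<bar>e $ i\<bar> = 1\<close> \<open>int_vec v\<close> span_e \<open>v \<noteq> 0\<close>] by blast
  have "seg_generator a b (real n *\<^sub>R e)"
    unfolding seg_generator_def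
  proof (intro conjI allI impI)
    show "\<exists>t>0. real n *\<^sub>R e = t *\<^sub>R (b - a)"
      using \<open>0 < n\<close> \<open>(b - a) $ i \<noteq> 0\<close>
      by (intro exI[of _ "real n / \<bar>(b - a) $ i\<bar>"]) (simp add: e_def)
  qed (use \<open>int_vec (real n *\<^sub>R e)\<close> gen span_e in blast)+
  then show ?thesis ..
qed

lemma lattice_segment_length:
  assumes "lattice_segment a b"
  shows "\<exists>g. int_vec g \<and> g \<noteq> 0 \<and> 0 < lattice_length a b \<and> b - a = lattice_length a b *\<^sub>R g"
proof -
  obtain g where g: "seg_generator a b g"
    using seg_generator_exists[OF assms] ..
  then obtain t where "t > 0" "g = t *\<^sub>R (b - a)"
    unfolding seg_generator_def by blast
  moreover have "a \<noteq> b"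
    using assms unfolding lattice_segment_def by blast
  ultimately have "g \<noteq> 0" "b - a = (1 / t) *\<^sub>R g"
    by auto
  moreover have "lattice_length a b = 1 / t"
    using lattice_length_eq[OF g \<open>a \<noteq> b\<close> \<open>b - a = (1 / t) *\<^sub>R g\<close>] .
  ultimately show ?thesis
    using g \<open>t > 0\<close> unfolding seg_generator_def by auto
qed

lemma lattice_length_le_norm:
  assumes "lattice_segment a b"
  shows "lattice_length a b \<le> norm (b - a)"
proof -
  obtain g where "int_vec g" "g \<noteq> 0" "0 < lattice_length a b" "b - a = lattice_length a b *\<^sub>R g"
    using lattice_segment_length[OF assms] by blast
  moreover from this have "1 \<le> norm g"
    by (intro norm_ge_1_if_int_vec)
  ultimately show ?thesis
    by (simp add: mult_le_cancel_left1)
qed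

lemma lattice_length_primitive:
  assumes "int_vec g" "\<bar>g $ i\<bar> = 1" "0 < L"
  shows "lattice_segment y (y + L *\<^sub>R g)" "lattice_length y (y + L *\<^sub>R g) = L"
proof -
  have "g \<noteq> 0"
    using assms(2) by auto
  then have "y \<noteq> y + L *\<^sub>R g"
    using assms(3) by simp
  then show "lattice_segment y (y + L *\<^sub>R g)"
    unfolding lattice_segment_def using assms(1) \<open>g \<noteq> 0\<close> by auto
  have "seg_generator y (y + L *\<^sub>R g) g"
    unfolding seg_generator_def
  proof (intro conjI allI impI)
    show "int_vec g" by fact
    show "\<exists>t>0. g = t *\<^sub>R (y + L *\<^sub>R g - y)"
      using assms(3) by (intro exI[of _ "1 / L"]) simp
    fix w
    assume "int_vec w \<and> w \<in> span {y + L *\<^sub>R g - y}"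
    then obtain c where "int_vec w" "w = (c * L) *\<^sub>R g"
      by (auto simp: span_singleton)
    then show "\<exists>k::int. w = of_int k *\<^sub>R g"
      using assms(2) by (intro int_multiple_if_unit_component) (simp_all add: span_base span_scale)
  qed
  then show "lattice_length y (y + L *\<^sub>R g) = L"
    using \<open>y \<noteq> y + L *\<^sub>R g\<close> by (rule lattice_length_eq) simp
qed

section \<open>Lattice width and lattice diameter\<close>

definition directional_width :: "(real^'n) set \<Rightarrow> real^'n \<Rightarrow> real" where
  "directional_width K y = Sup {y \<bullet> (a - b) | a b. a \<in> K \<and> b \<in> K}"

lemma lattice_width_eq_Inf_directional_width:
  "lattice_width K = Inf (directional_width K ` {y. int_vec y \<and> y \<noteq> 0})"
  unfolding lattice_width_def directional_width_def ..

lemma compact_directional_differences: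
  assumes "compact K"
  shows "compact {y \<bullet> (a - b) | a b. a \<in> K \<and> b \<in> K}"
proof -
  have "{y \<bullet> (a - b) | a b. a \<in> K \<and> b \<in> K} = (\<lambda>z. y \<bullet> (fst z - snd z)) ` (K \<times> K)"
    by force
  then show ?thesis
    using assms by (auto intro!: compact_continuous_image compact_Times continuous_intros)
qed

lemma directional_width_ge:
  assumes "compact K" "a \<in> K" "b \<in> K"
  shows "y \<bullet> (a - b) \<le> directional_width K y"
  unfolding directional_width_def
  using assms compact_directional_differences[OF assms(1)]
  by (intro cSup_upper bounded_imp_bdd_above compact_imp_bounded) auto

lemma directional_width_attained:
  assumes "compact K" "K \<noteq> {}"
  shows "\<exists>a\<in>K. \<exists>b\<in>K. directional_width K y = y \<bullet> (a - b)"
proof -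
  have "Sup {y \<bullet> (a - b) | a b. a \<in> K \<and> b \<in> K} \<in> {y \<bullet> (a - b) | a b. a \<in> K \<and> b \<in> K}"
    using compact_directional_differences[OF assms(1)] assms(2)
    by (intro closed_contains_Sup bounded_imp_bdd_above compact_imp_bounded compact_imp_closed) auto
  then show ?thesis
    unfolding directional_width_def by blast
qed

lemma lattice_width_le_directional_width:
  assumes "compact K" "K \<noteq> {}" "int_vec y" "y \<noteq> 0"
  shows "lattice_width K \<le> directional_width K y"
  unfolding lattice_width_eq_Inf_directional_width
proof (rule cInf_lower)
  show "directional_width K y \<in> directional_width K ` {y. int_vec y \<and> y \<noteq> 0}"
    using assms(3,4) by blast
  obtain a where "a \<in> K"
    using assms(2) by blast
  then have "0 \<le> directional_width K z" for z
    using directional_width_ge[OF assms(1) \<open>a \<in> K\<close> \<open>a \<in> K\<close>, of z] by simp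
  then show "bdd_below (directional_width K ` {y. int_vec y \<and> y \<noteq> 0})"
    by (auto intro: bdd_belowI[of _ 0])
qed

lemma lattice_width_ge:
  assumes "compact K" and wide: "\<And>y. int_vec y \<Longrightarrow> y \<noteq> 0 \<Longrightarrow> \<exists>a\<in>K. \<exists>b\<in>K. c \<le> y \<bullet> (a - b)"
  shows "c \<le> lattice_width K"
  unfolding lattice_width_eq_Inf_directional_width
proof (rule cInf_greatest)
  show "directional_width K ` {y. int_vec y \<and> y \<noteq> 0} \<noteq> {}"
    using int_vec_axis[of undefined] axis_eq_0_iff[of undefined 1] by force
  fix w
  assume "w \<in> directional_width K ` {y. int_vec y \<and> y \<noteq> 0}"
  then obtain y where "int_vec y" "y \<noteq> 0" "w = directional_width K y"
    by blast
  with wide obtain a b where "a \<in> K" "b \<in> K" "c \<le> y \<bullet> (a - b)"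
    by blast
  then show "c \<le> w"
    using directional_width_ge[OF assms(1), of a b y] \<open>w = directional_width K y\<close> by simp
qed

lemma lattice_length_le_diam:
  assumes "compact K" "a \<in> K" "b \<in> K" "lattice_segment a b"
  shows "lattice_length a b \<le> lattice_diam K"
  unfolding lattice_diam_def
proof (rule cSup_upper)
  show "lattice_length a b \<in> {lattice_length a b | a b. a \<in> K \<and> b \<in> K \<and> lattice_segment a b}"
    using assms by blast
  obtain R where R: "\<And>x. x \<in> K \<Longrightarrow> norm x \<le> R"
    using compact_imp_bounded[OF assms(1)] by (auto simp: bounded_iff)
  have "lattice_length a' b' \<le> 2 * R" if "a' \<in> K" "b' \<in> K" "lattice_segment a' b'" for a' b'
    using lattice_length_le_norm[OF that(3)] norm_triangle_ineq4[of b' a'] R[OF that(1)] R[OF that(2)]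
    by linarith
  then show "bdd_above {lattice_length a b | a b. a \<in> K \<and> b \<in> K \<and> lattice_segment a b}"
    by (auto intro: bdd_aboveI[of _ "2 * R"])
qed

lemma lattice_diam_le:
  assumes "a \<in> K" "b \<in> K" "lattice_segment a b"
    and short: "\<And>a b. a \<in> K \<Longrightarrow> b \<in> K \<Longrightarrow> lattice_segment a b \<Longrightarrow> lattice_length a b \<le> c"
  shows "lattice_diam K \<le> c"
  unfolding lattice_diam_def using assms by (intro cSup_least) auto

section \<open>Zero-sum integer vectors with congruent entries\<close>

lemma exists_neg_if_sum_eq_0:
  fixes z :: "'j::finite \<Rightarrow> 'a::linordered_ab_group_add"
  assumes "sum z UNIV = 0" "z \<noteq> (\<lambda>_. 0)"
  shows "\<exists>j. z j < 0"
proof (rule ccontr)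
  assume "\<nexists>j. z j < 0"
  then have "\<forall>j. z j = 0"
    using assms(1) by (simp add: not_less sum_nonneg_eq_0_iff)
  with assms(2) show False
    by auto
qed

lemma weighted_parts_ge_if_mod:
  fixes w A r :: int
  assumes "w mod A = r" "0 < r" "r < A"
  shows "r * (A - r) \<le> r * max 0 (- w) + (A - r) * max 0 w"
proof -
  obtain q where w: "w = A * q + r"
    using assms(1) div_mult_mod_eq[of w A] by (metis mult.commute)
  show ?thesis
  proof (cases "q \<ge> 0")
    case True
    then have "0 \<le> A * q"
      using assms(2,3) by (intro mult_nonneg_nonneg) auto
    then have "r \<le> w"
      using w by simp
    then show ?thesis
      using assms(2,3) by (simp add: mult_left_mono)
  next
    case False
    then have "A * q \<le> A * (-1)"
      using assms by (intro mult_left_mono) auto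
    then have "A - r \<le> - w"
      using w by simp
    then have "r * (A - r) \<le> r * (- w)"
      using assms(2) by (intro mult_left_mono) auto
    moreover have "w < 0"
      using \<open>A - r \<le> - w\<close> assms(3) by simp
    ultimately show ?thesis
      by simp
  qed
qed

text \<open>For \<open>r > 0\<close>, weighting negative parts by \<open>r\<close> and positive parts by \<open>A - r\<close> gives at least
  \<open>r (A - r)\<close> per entry, while a zero-sum vector has equal positive and negative mass.\<close>
lemma negative_part_ge_if_zero_sum_congruent:
  fixes w :: "'j::finite \<Rightarrow> int"
  assumes sum0: "sum w UNIV = 0" and cong: "\<And>j. w j mod int CARD('j) = r" and "w \<noteq> (\<lambda>_. 0)"
  shows "int CARD('j) - 1 \<le> (\<Sum>j\<in>UNIV. max 0 (- w j))"
proof -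
  define A where "A = int CARD('j)"
  define N where "N = (\<Sum>j\<in>UNIV. max 0 (- w j))"
  have "A > 0"
    by (simp add: A_def)
  have "(\<Sum>j\<in>UNIV. max 0 (w j)) - N = (\<Sum>j\<in>UNIV. w j)"
    unfolding N_def sum_subtractf[symmetric] by (intro sum.cong) auto
  then have P_eq_N: "(\<Sum>j\<in>UNIV. max 0 (w j)) = N"
    using sum0 by simp
  have congA: "w j mod A = r" for j
    using cong unfolding A_def .
  have "0 \<le> r" "r < A"
    using pos_mod_sign[OF \<open>A > 0\<close>] pos_mod_bound[OF \<open>A > 0\<close>] congA[of undefined] by auto
  show ?thesis
  proof (cases "r = 0")
    case True
    obtain j where "w j < 0"
      using exists_neg_if_sum_eq_0[OF sum0 assms(3)] ..
    moreover have "A dvd w j"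
      using congA[of j] True by auto
    ultimately have "A \<le> - w j"
      using zdvd_imp_le[of A "- w j"] by simp
    also have "\<dots> \<le> N"
      unfolding N_def using \<open>w j < 0\<close> member_le_sum[of j UNIV "\<lambda>j. max 0 (- w j)"] by simp
    finally show ?thesis
      unfolding A_def N_def by simp
  next
    case False
    then have "0 < r"
      using \<open>0 \<le> r\<close> by simp
    have "A * (r * (A - r)) = (\<Sum>j\<in>(UNIV :: 'j set). r * (A - r))"
      by (simp add: A_def)
    also have "\<dots> \<le> (\<Sum>j\<in>UNIV. r * max 0 (- w j) + (A - r) * max 0 (w j))"
      using weighted_parts_ge_if_mod[OF congA \<open>0 < r\<close> \<open>r < A\<close>] by (intro sum_mono)
    also have "\<dots> = r * N + (A - r) * (\<Sum>j\<in>UNIV. max 0 (w j))"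
      by (simp add: N_def sum.distrib sum_distrib_left)
    also have "\<dots> = A * N"
      using P_eq_N by (simp add: algebra_simps)
    finally have "r * (A - r) \<le> N"
      using \<open>A > 0\<close> by simp
    moreover have "0 \<le> (r - 1) * (A - 1 - r)"
      using \<open>0 < r\<close> \<open>r < A\<close> by simp
    ultimately show ?thesis
      unfolding A_def N_def by (simp add: algebra_simps)
  qed
qed

section \<open>Barycentric coordinates on the simplex\<close>

lemma sum_UNIV_option:
  fixes h :: "'n::finite option \<Rightarrow> 'a::comm_monoid_add"
  shows "(\<Sum>j\<in>UNIV. h j) = h None + (\<Sum>i\<in>UNIV. h (Some i))"
  unfolding UNIV_option_conv by (simp add: sum.reindex)

lemma card_UNIV_option: "CARD('n::finite option) = CARD('n) + 1"
  using sum_UNIV_option[where 'n='n, of "\<lambda>_. 1 :: nat"] by simp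

definition simplex_vertex :: "'n option \<Rightarrow> real^'n" where
  "simplex_vertex j = (case j of None \<Rightarrow> - (\<chi> i. 1) | Some i \<Rightarrow> axis i 1)"

definition bary_coord :: "real^'n \<Rightarrow> 'n option \<Rightarrow> real" where
  "bary_coord x j =
     (case j of None \<Rightarrow> 0 | Some i \<Rightarrow> x $ i) + (1 - sum (($) x) UNIV) / (real CARD('n) + 1)"

lemma simplex_S_eq_convex_hull_vertices: "(simplex_S :: (real^'n) set) = convex hull (range simplex_vertex)"
  unfolding simplex_S_def UNIV_option_conv by (simp add: simplex_vertex_def image_image)

lemma sum_components_linear:
  fixes x y :: "real^'n"
  shows "sum (($) (a *\<^sub>R x + b *\<^sub>R y)) UNIV = a * sum (($) x) UNIV + b * sum (($) y) UNIV"
  by (simp add: sum.distrib sum_distrib_left)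

lemma bary_coord_affine:
  fixes x y :: "real^'n"
  assumes "u + v = 1"
  shows "bary_coord (u *\<^sub>R x + v *\<^sub>R y) j = u * bary_coord x j + v * bary_coord y j"
proof -
  define A where "A = real CARD('n) + 1"
  define sx where "sx = sum (($) x) UNIV"
  define sy where "sy = sum (($) y) UNIV"
  have "1 - (u * sx + v * sy) = u * (1 - sx) + v * (1 - sy)"
    using assms by algebra
  then have "(1 - (u * sx + v * sy)) / A = u * ((1 - sx) / A) + v * ((1 - sy) / A)"
    by (simp add: add_divide_distrib)
  then show ?thesis
    unfolding bary_coord_def sum_components_linear
    by (cases j) (simp_all add: distrib_left flip: A_def sx_def sy_def)
qed

lemma bary_coord_add_scaleR:
  fixes x v :: "real^'n"
  shows "bary_coord (x + c *\<^sub>R v) j = bary_coord x j +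
    c * ((case j of None \<Rightarrow> 0 | Some i \<Rightarrow> v $ i) - sum (($) v) UNIV / (real CARD('n) + 1))"
proof -
  have sums: "sum (($) (x + c *\<^sub>R v)) UNIV = sum (($) x) UNIV + c * sum (($) v) UNIV"
    using sum_components_linear[of 1 x c v] by simp
  show ?thesis
    unfolding bary_coord_def sums
    by (cases j) (simp_all add: diff_divide_distrib add_divide_distrib algebra_simps)
qed

lemma bary_coord_zero: "bary_coord (0 :: real^'n) j = 1 / (real CARD('n) + 1)"
  by (cases j) (simp_all add: bary_coord_def)

lemma bary_coord_vertex: "bary_coord (simplex_vertex k :: real^'n) j = (if j = k then 1 else 0)"
  by (cases j; cases k) (simp_all add: bary_coord_def simplex_vertex_def axis_def)

lemma bary_coord_scaleR_vertex:
  "bary_coord (t *\<^sub>R simplex_vertex k :: real^'n) j =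
    (1 - t) / (real CARD('n) + 1) + t * (if j = k then 1 else 0)"
  using bary_coord_affine[of "1 - t" t 0 "simplex_vertex k" j]
  by (simp add: bary_coord_zero bary_coord_vertex)

lemma sum_bary_coord: "(\<Sum>j\<in>UNIV. bary_coord (x :: real^'n) j) = 1"
proof -
  define m where "m = (1 - sum (($) x) UNIV) / (real CARD('n) + 1)"
  have "(\<Sum>j\<in>UNIV. bary_coord x j) = m + (\<Sum>i\<in>UNIV. x $ i + m)"
    by (simp add: sum_UNIV_option bary_coord_def m_def)
  also have "\<dots> = sum (($) x) UNIV + (real CARD('n) + 1) * m"
    by (simp add: sum.distrib algebra_simps)
  also have "\<dots> = 1"
    by (simp add: m_def)
  finally show ?thesis .
qed

lemma sum_bary_coord_scaleR_vertex: "(\<Sum>j\<in>UNIV. bary_coord (x :: real^'n) j *\<^sub>R simplex_vertex j) = x"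
proof -
  have "(\<Sum>j\<in>UNIV. bary_coord x j *\<^sub>R simplex_vertex j) $ k = x $ k" for k
  proof -
    have "(\<Sum>i\<in>UNIV. bary_coord x (Some i) * axis i 1 $ k) =
        (\<Sum>i\<in>UNIV. if i = k then bary_coord x (Some i) else 0)"
      by (intro sum.cong) (auto simp: axis_def)
    then have "(\<Sum>i\<in>UNIV. bary_coord x (Some i) * axis i 1 $ k) = bary_coord x (Some k)"
      by simp
    then show ?thesis
      by (simp add: sum_UNIV_option simplex_vertex_def bary_coord_def)
  qed
  then show ?thesis
    by (simp add: vec_eq_iff)
qed

lemma simplex_S_eq_bary_coord_nonneg: "simplex_S = {x :: real^'n. \<forall>j. 0 \<le> bary_coord x j}"
proof
  show "simplex_S \<subseteq> {x. \<forall>j. 0 \<le> bary_coord x j}"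
    unfolding simplex_S_eq_convex_hull_vertices
  proof (rule hull_minimal)
    show "range simplex_vertex \<subseteq> {x. \<forall>j. 0 \<le> bary_coord x j}"
      by (auto simp: bary_coord_vertex)
    show "convex {x. \<forall>j. 0 \<le> bary_coord x j}"
      by (auto simp: convex_def bary_coord_affine)
  qed
  show "{x. \<forall>j. 0 \<le> bary_coord x j} \<subseteq> simplex_S"
  proof
    fix x
    assume "x \<in> {x. \<forall>j. 0 \<le> bary_coord x j}"
    then have "(\<Sum>j\<in>UNIV. bary_coord x j *\<^sub>R simplex_vertex j) \<in> simplex_S"
      unfolding simplex_S_eq_convex_hull_vertices
      by (intro convex_sum) (auto simp: sum_bary_coord hull_inc)
    then show "x \<in> simplex_S"
      by (simp add: sum_bary_coord_scaleR_vertex)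
  qed
qed

lemma bary_coord_nonneg: "x \<in> simplex_S \<Longrightarrow> 0 \<le> bary_coord x j"
  by (simp add: simplex_S_eq_bary_coord_nonneg)

lemma bary_coord_le_1:
  fixes x :: "real^'n"
  assumes "x \<in> simplex_S"
  shows "bary_coord x j \<le> 1"
  using member_le_sum[of j UNIV "bary_coord x"] assms
  by (simp add: sum_bary_coord simplex_S_eq_bary_coord_nonneg)

lemma eq_vertex_if_bary_coord_eq_1:
  fixes x :: "real^'n"
  assumes "x \<in> simplex_S" "bary_coord x k = 1"
  shows "x = simplex_vertex k"
proof -
  have "(\<Sum>j\<in>UNIV - {k}. bary_coord x j) = 0"
    using sum.remove[of UNIV k "bary_coord x"] assms(2) by (simp add: sum_bary_coord)
  then have "\<forall>j\<in>UNIV - {k}. bary_coord x j = 0"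
    using assms(1) by (simp add: sum_nonneg_eq_0_iff simplex_S_eq_bary_coord_nonneg)
  then have "(\<Sum>j\<in>UNIV. bary_coord x j *\<^sub>R simplex_vertex j) = simplex_vertex k"
    using assms(2) by (subst sum.remove[of UNIV k]) auto
  then show ?thesis
    by (simp add: sum_bary_coord_scaleR_vertex)
qed

lemma component_eq_bary_coord_diff: "(x :: real^'n) $ i = bary_coord x (Some i) - bary_coord x None"
  by (simp add: bary_coord_def)

lemma convex_body_simplex_S: "convex_body (simplex_S :: (real^'n) set)"
  unfolding convex_body_def
proof (intro conjI)
  show "convex (simplex_S :: (real^'n) set)" "compact (simplex_S :: (real^'n) set)"
    unfolding simplex_S_eq_convex_hull_vertices
    by (simp_all add: compact_convex_hull finite_imp_compact)
  have "open {x :: real^'n. 0 < bary_coord x j}" for j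
    by (cases j) (auto simp: bary_coord_def intro!: open_Collect_less continuous_intros)
  then have "open (\<Inter>j. {x :: real^'n. 0 < bary_coord x j})"
    by (intro open_INT) auto
  moreover have "(\<Inter>j. {x :: real^'n. 0 < bary_coord x j}) \<subseteq> simplex_S"
    by (auto simp: simplex_S_eq_bary_coord_nonneg less_imp_le)
  moreover have "0 \<in> (\<Inter>j. {x :: real^'n. 0 < bary_coord x j})"
    by (simp add: bary_coord_zero)
  ultimately show "interior (simplex_S :: (real^'n) set) \<noteq> {}"
    using interior_maximal by blast
qed

lemma simplex_vertex_in_simplex_S: "simplex_vertex j \<in> (simplex_S :: (real^'n) set)"
  by (simp add: simplex_S_eq_convex_hull_vertices hull_inc)

lemma int_vec_simplex_vertex: "int_vec (simplex_vertex j :: real^'n)"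
  by (cases j) (simp_all add: simplex_vertex_def int_vec_axis, simp add: int_vec_def)

lemma simplex_vertex_unit_component: "\<exists>i. \<bar>(simplex_vertex j :: real^'n) $ i\<bar> = 1"
proof (cases j)
  case (Some i)
  then show ?thesis
    by (intro exI[of _ i]) (simp add: simplex_vertex_def)
qed (simp add: simplex_vertex_def)

section \<open>The simplex is lattice reduced\<close>

lemma inner_simplex_vertex:
  "y \<bullet> simplex_vertex j = (case j of None \<Rightarrow> - sum (($) y) UNIV | Some i \<Rightarrow> y $ i)"
  for y :: "real^'n"
proof -
  have "y \<bullet> (\<chi> i. 1) = sum (($) y) UNIV"
    by (simp add: inner_vec_def)
  then show ?thesis
    by (cases j) (simp_all add: simplex_vertex_def inner_axis)
qed

lemma sum_inner_simplex_vertex: "(\<Sum>j\<in>UNIV. y \<bullet> simplex_vertex j) = 0" for y :: "real^'n"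
  by (simp add: sum_UNIV_option inner_simplex_vertex)

lemma simplex_S_width_witness:
  fixes y :: "real^'n"
  assumes "int_vec y" "y \<noteq> 0"
  shows "\<exists>a\<in>simplex_S. \<exists>b\<in>simplex_S. 2 \<le> y \<bullet> (a - b)"
proof -
  define z where "z j = y \<bullet> simplex_vertex j" for j
  have z_int: "z j \<in> \<int>" for j
    using assms(1) by (cases j) (auto simp: z_def inner_simplex_vertex int_vec_def)
  have "z \<noteq> (\<lambda>_. 0)"
  proof
    assume z0: "z = (\<lambda>_. 0)"
    have "y $ i = 0" for i
      using fun_cong[OF z0, of "Some i"] by (simp add: z_def inner_simplex_vertex)
    with assms(2) show False
      by (simp add: vec_eq_iff)
  qed
  moreover have "sum z UNIV = 0"
    unfolding z_def by (rule sum_inner_simplex_vertex)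
  ultimately obtain j k where "z j < 0" "0 < z k"
    using exists_neg_if_sum_eq_0[of z] exists_neg_if_sum_eq_0[of "\<lambda>j. - z j"]
    by (force simp: sum_negf fun_eq_iff)
  then have "z j \<le> -1" "1 \<le> z k"
    using Ints_nonzero_abs_ge1[OF z_int[of j]] Ints_nonzero_abs_ge1[OF z_int[of k]] by auto
  then have "2 \<le> y \<bullet> (simplex_vertex k - simplex_vertex j)"
    by (simp add: z_def inner_diff_right)
  then show ?thesis
    using simplex_vertex_in_simplex_S by blast
qed

lemma lattice_width_simplex_S_ge_2: "2 \<le> lattice_width (simplex_S :: (real^'n) set)"
  using convex_body_simplex_S simplex_S_width_witness
  unfolding convex_body_def by (intro lattice_width_ge) auto

lemma directional_width_axis_lt_2:
  fixes K :: "(real^'n) set"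
  assumes "compact K" "K \<noteq> {}" "K \<subseteq> simplex_S"
    and missing: "\<not> (simplex_vertex (Some i) \<in> K \<and> simplex_vertex None \<in> K)"
  shows "directional_width K (axis i 1) < 2"
proof -
  obtain a b where "a \<in> K" "b \<in> K" and width: "directional_width K (axis i 1) = a $ i - b $ i"
    using directional_width_attained[OF assms(1,2), of "axis i 1"] by (auto simp: inner_axis')
  then have S: "a \<in> simplex_S" "b \<in> simplex_S"
    using assms(3) by auto
  have "a $ i - b $ i =
      bary_coord a (Some i) - bary_coord a None - bary_coord b (Some i) + bary_coord b None"
    by (simp add: component_eq_bary_coord_diff)
  moreover have "bary_coord a (Some i) \<le> 1" "bary_coord b None \<le> 1"
    using S by (simp_all add: bary_coord_le_1)
  moreover have "0 \<le> bary_coord a None" "0 \<le> bary_coord b (Some i)"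
    using S by (simp_all add: simplex_S_eq_bary_coord_nonneg)
  moreover have "bary_coord a (Some i) \<noteq> 1 \<or> bary_coord b None \<noteq> 1"
    using eq_vertex_if_bary_coord_eq_1[OF S(1)] eq_vertex_if_bary_coord_eq_1[OF S(2)]
      \<open>a \<in> K\<close> \<open>b \<in> K\<close> missing by blast
  ultimately show ?thesis
    using width by linarith
qed

lemma lattice_reduced_simplex_S: "lattice_reduced (simplex_S :: (real^'n) set)"
  unfolding lattice_reduced_def
proof (intro conjI allI impI)
  show "convex_body (simplex_S :: (real^'n) set)"
    by (rule convex_body_simplex_S)
  fix K :: "(real^'n) set"
  assume K: "convex_body K \<and> K \<subset> simplex_S"
  then have "compact K" "K \<noteq> {}"
    unfolding convex_body_def by auto
  obtain k where "simplex_vertex k \<notin> K"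
  proof (rule ccontr)
    assume "\<not> thesis"
    then have "range simplex_vertex \<subseteq> K"
      using that by blast
    then have "simplex_S \<subseteq> K"
      using K unfolding convex_body_def simplex_S_eq_convex_hull_vertices by (intro hull_minimal) auto
    with K show False
      by blast
  qed
  then obtain i where "\<not> (simplex_vertex (Some i) \<in> K \<and> simplex_vertex None \<in> K)"
    by (cases k) auto
  then have "directional_width K (axis i 1) < 2"
    using K \<open>compact K\<close> \<open>K \<noteq> {}\<close> by (intro directional_width_axis_lt_2) auto
  moreover have "lattice_width K \<le> directional_width K (axis i 1)"
    using \<open>compact K\<close> \<open>K \<noteq> {}\<close> int_vec_axis by (rule lattice_width_le_directional_width) simp
  ultimately show "lattice_width K \<noteq> lattice_width (simplex_S :: (real^'n) set)"
    using lattice_width_simplex_S_ge_2[where 'n='n] by linarith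
qed

section \<open>The simplex is lattice complete\<close>

lemma bary_coord_lattice_direction:
  fixes g :: "real^'n"
  assumes "int_vec g" "g \<noteq> 0"
  shows "\<exists>(W :: 'n option \<Rightarrow> int) r.
    (\<forall>x c j. bary_coord (x + c *\<^sub>R g) j = bary_coord x j + c * of_int (W j) / (real CARD('n) + 1)) \<and>
    sum W UNIV = 0 \<and> (\<forall>j. W j mod (int CARD('n) + 1) = r) \<and> W \<noteq> (\<lambda>_. 0)"
proof -
  define h where "h i = \<lfloor>g $ i\<rfloor>" for i
  have g_h: "g $ i = of_int (h i)" for i
    using assms(1) unfolding int_vec_def h_def by simp
  define s where "s = (\<Sum>i\<in>UNIV. h i)"
  define W where "W j = (case j of None \<Rightarrow> 0 | Some i \<Rightarrow> (int CARD('n) + 1) * h i) - s" for j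
  have "sum (($) g) UNIV = (\<Sum>i\<in>UNIV. of_int (h i))"
    by (rule sum.cong) (simp_all add: g_h)
  then have sum_g: "sum (($) g) UNIV = of_int s"
    by (simp add: s_def)
  have step: "bary_coord (x + c *\<^sub>R g) j = bary_coord x j + c * of_int (W j) / (real CARD('n) + 1)"
    for x c j
    unfolding bary_coord_add_scaleR sum_g
    by (cases j) (simp_all add: W_def g_h field_simps)
  have "(\<Sum>i\<in>UNIV. W (Some i)) = (\<Sum>i\<in>UNIV. (int CARD('n) + 1) * h i) - (\<Sum>i\<in>(UNIV :: 'n set). s)"
    by (simp add: W_def sum_subtractf)
  also have "\<dots> = (int CARD('n) + 1) * s - int CARD('n) * s"
    by (simp add: s_def sum_distrib_left)
  finally have sum0: "sum W UNIV = 0"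
    by (simp add: sum_UNIV_option W_def algebra_simps)
  have cong: "W j mod (int CARD('n) + 1) = (- s) mod (int CARD('n) + 1)" for j
  proof (cases j)
    case (Some i)
    then have "W j = - s + h i * (int CARD('n) + 1)"
      by (simp add: W_def)
    then show ?thesis
      by (simp only: mod_mult_self1)
  qed (simp add: W_def)
  have nonzero: "W \<noteq> (\<lambda>_. 0)"
  proof
    assume W0: "W = (\<lambda>_. 0)"
    have "s = 0"
      using fun_cong[OF W0, of None] by (simp add: W_def)
    then have "h i = 0" for i
      using fun_cong[OF W0, of "Some i"] by (simp add: W_def)
    with assms(2) show False
      by (simp add: vec_eq_iff g_h)
  qed
  show ?thesis
    by (intro exI[of _ W] exI[of _ "(- s) mod (int CARD('n) + 1)"] conjI allI step sum0 cong nonzero)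
qed

lemma simplex_chord_bound:
  fixes a g :: "real^'n"
  assumes "a \<in> simplex_S" "a + c *\<^sub>R g \<in> simplex_S" "int_vec g" "g \<noteq> 0" "0 < c"
  shows "c * real CARD('n) \<le> real CARD('n) + 1"
proof -
  obtain W :: "'n option \<Rightarrow> int" and r
    where step: "\<forall>x c j. bary_coord (x + c *\<^sub>R g) j =
        bary_coord x j + c * of_int (W j) / (real CARD('n) + 1)"
      and "sum W UNIV = 0" and cong: "\<forall>j. W j mod (int CARD('n) + 1) = r" and "W \<noteq> (\<lambda>_. 0)"
    using bary_coord_lattice_direction[OF assms(3,4)] by blast
  define A where "A = real CARD('n) + 1"
  have "A > 0"
    by (simp add: A_def)
  have "c * max 0 (- of_int (W j)) / A \<le> bary_coord a j" for j
  proof -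
    have "0 \<le> bary_coord a j" "0 \<le> bary_coord a j + c * of_int (W j) / A"
      using bary_coord_nonneg[OF assms(1)] bary_coord_nonneg[OF assms(2), of j]
        step[rule_format, of a c j, folded A_def] by simp_all
    then show ?thesis
      by (cases "W j \<le> 0") (simp_all add: max_def)
  qed
  then have "(\<Sum>j\<in>UNIV. c * max 0 (- of_int (W j)) / A) \<le> (\<Sum>j\<in>UNIV. bary_coord a j)"
    by (intro sum_mono)
  then have "c * of_int (\<Sum>j\<in>UNIV. max 0 (- W j)) \<le> A"
    using \<open>A > 0\<close> unfolding sum_bary_coord
    by (simp add: sum_divide_distrib[symmetric] sum_distrib_left[symmetric] of_int_max)
  moreover have "int CARD('n) \<le> (\<Sum>j\<in>UNIV. max 0 (- W j))"
  proof -
    have "W j mod int CARD('n option) = r" for j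
      using cong by (simp add: card_UNIV_option add.commute)
    from negative_part_ge_if_zero_sum_congruent[OF \<open>sum W UNIV = 0\<close> this \<open>W \<noteq> (\<lambda>_. 0)\<close>]
    show ?thesis
      by (simp add: card_UNIV_option)
  qed
  then have "real_of_int (int CARD('n)) \<le> of_int (\<Sum>j\<in>UNIV. max 0 (- W j))"
    by (simp only: of_int_le_iff)
  then have "c * real CARD('n) \<le> c * of_int (\<Sum>j\<in>UNIV. max 0 (- W j))"
    using \<open>0 < c\<close> by (intro mult_left_mono) simp_all
  ultimately show ?thesis
    unfolding A_def by linarith
qed

lemma lattice_diam_simplex_S_le:
  "lattice_diam (simplex_S :: (real^'n) set) \<le> (real CARD('n) + 1) / real CARD('n)"
proof (rule lattice_diam_le)
  have "lattice_segment 0 (0 + 1 *\<^sub>R axis undefined 1 :: real^'n)"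
    using int_vec_axis by (rule lattice_length_primitive[where i=undefined]) simp_all
  then show "lattice_segment 0 (axis undefined 1 :: real^'n)"
    by simp
  show "0 \<in> (simplex_S :: (real^'n) set)"
    by (simp add: simplex_S_eq_bary_coord_nonneg bary_coord_zero)
  show "axis undefined 1 \<in> (simplex_S :: (real^'n) set)"
    using simplex_vertex_in_simplex_S[of "Some undefined"] by (simp add: simplex_vertex_def)
  fix a b :: "real^'n"
  assume "a \<in> simplex_S" "b \<in> simplex_S" "lattice_segment a b"
  define L where "L = lattice_length a b"
  obtain g where "int_vec g" "g \<noteq> 0" "0 < L" "b - a = L *\<^sub>R g"
    using lattice_segment_length[OF \<open>lattice_segment a b\<close>] unfolding L_def by blast
  moreover from this have "a + L *\<^sub>R g \<in> simplex_S"
    using \<open>b \<in> simplex_S\<close> by (metis add.commute diff_add_cancel)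
  ultimately have "L * real CARD('n) \<le> real CARD('n) + 1"
    using simplex_chord_bound[OF \<open>a \<in> simplex_S\<close>] by blast
  then show "lattice_length a b \<le> (real CARD('n) + 1) / real CARD('n)"
    by (simp add: L_def le_divide_eq)
qed

lemma mem_convex_superset_if_bary_coord_ge:
  fixes K :: "(real^'n) set"
  assumes "convex K" "simplex_S \<subseteq> K" "p \<in> K" "0 < s" "s < 1"
    and ge: "\<And>k. s * bary_coord p k \<le> bary_coord y k"
  shows "y \<in> K"
proof -
  define f where "f = (1 / (1 - s)) *\<^sub>R y + (- s / (1 - s)) *\<^sub>R p"
  have "bary_coord f k = (bary_coord y k - s * bary_coord p k) / (1 - s)" for k
  proof -
    have "bary_coord f k = 1 / (1 - s) * bary_coord y k + (- s / (1 - s)) * bary_coord p k"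
      unfolding f_def using \<open>s < 1\<close> by (intro bary_coord_affine) (simp add: field_simps)
    then show ?thesis
      by (simp add: diff_divide_distrib)
  qed
  then have "f \<in> K"
    using assms(2) \<open>s < 1\<close> ge by (auto simp: simplex_S_eq_bary_coord_nonneg)
  moreover have "y = (1 - s) *\<^sub>R f + s *\<^sub>R p"
    using \<open>s < 1\<close> by (simp add: f_def scaleR_add_right field_simps)
  ultimately show ?thesis
    using convexD[OF assms(1) _ assms(3), of f "1 - s" s] assms(4,5) by simp
qed

text \<open>If \<open>p\<close> lies beyond the facet opposite to \<open>v\<^sub>j\<close>, a small step from that facet towards \<open>p\<close>
  carries its centroid \<open>- v\<^sub>j / d\<close> to a point \<open>- \<tau> v\<^sub>j\<close> with \<open>\<tau> > 1 / d\<close>.\<close>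
lemma opposite_vertex_multiple_in_hull:
  fixes K :: "(real^'n) set"
  assumes "convex K" "simplex_S \<subseteq> K" "p \<in> K" "bary_coord p j < 0"
  shows "\<exists>\<tau>. 1 / real CARD('n) < \<tau> \<and> (- \<tau>) *\<^sub>R simplex_vertex j \<in> K"
proof -
  define d where "d = real CARD('n)"
  define A where "A = d + 1"
  define \<alpha> where "\<alpha> = - bary_coord p j"
  define M where "M = (\<Sum>k\<in>UNIV. \<bar>bary_coord p k\<bar>)"
  define s where "s = 1 / (1 + A * M)"
  define \<tau> where "\<tau> = (1 + s * A * \<alpha>) / d"
  have "0 < d" "0 < A"
    by (simp_all add: d_def A_def)
  have "0 < \<alpha>"
    using assms(4) by (simp add: \<alpha>_def)
  have M_ge: "\<bar>bary_coord p k\<bar> \<le> M" for k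
    unfolding M_def by (rule member_le_sum) simp_all
  then have "0 < A * M"
    using \<open>0 < \<alpha>\<close> \<open>0 < A\<close> M_ge[of j] by (simp add: \<alpha>_def)
  then have "0 < s" "s < 1" "s * M < 1 / A"
    using \<open>0 < A\<close> by (simp_all add: s_def field_simps)
  then have "0 < s * A * \<alpha>"
    using \<open>0 < A\<close> \<open>0 < \<alpha>\<close> by simp
  then have "0 < \<tau>" "1 / d < \<tau>" and d_\<tau>: "d * \<tau> = 1 + s * A * \<alpha>"
    using \<open>0 < d\<close> by (simp_all add: \<tau>_def divide_strict_right_mono)
  define y where "y = (- \<tau>) *\<^sub>R simplex_vertex j"
  have bary_y: "bary_coord y k = (1 + \<tau>) / A - \<tau> * (if k = j then 1 else 0)" for k
    using bary_coord_scaleR_vertex[of "- \<tau>" j k] by (simp add: y_def A_def d_def)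
  have "s * bary_coord p k \<le> bary_coord y k" for k
  proof (cases "k = j")
    case True
    then have "bary_coord y k - s * bary_coord p k = (1 - d * \<tau> + s * A * \<alpha>) / A"
      using \<open>0 < A\<close> by (simp add: bary_y \<alpha>_def A_def field_simps)
    then show ?thesis
      using d_\<tau> by simp
  next
    case False
    have "s * bary_coord p k \<le> s * M"
      using M_ge[of k] \<open>0 < s\<close> by (intro mult_left_mono) auto
    moreover have "1 / A \<le> (1 + \<tau>) / A"
      using \<open>0 < \<tau>\<close> \<open>0 < A\<close> by (simp add: divide_right_mono)
    ultimately show ?thesis
      using False \<open>s * M < 1 / A\<close> by (simp add: bary_y)
  qed
  then have "y \<in> K"
    by (rule mem_convex_superset_if_bary_coord_ge[OF assms(1-3) \<open>0 < s\<close> \<open>s < 1\<close>])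
  with \<open>1 / d < \<tau>\<close> show ?thesis
    unfolding y_def d_def by blast
qed

lemma long_lattice_segment_beyond_facet:
  fixes K :: "(real^'n) set"
  assumes "convex K" "simplex_S \<subseteq> K" "p \<in> K" "bary_coord p j < 0"
  shows "\<exists>y\<in>K. lattice_segment y (simplex_vertex j) \<and>
    (real CARD('n) + 1) / real CARD('n) < lattice_length y (simplex_vertex j)"
proof -
  obtain \<tau> where "1 / real CARD('n) < \<tau>" and y: "(- \<tau>) *\<^sub>R simplex_vertex j \<in> K"
    using opposite_vertex_multiple_in_hull[OF assms] by blast
  obtain i where "\<bar>(simplex_vertex j :: real^'n) $ i\<bar> = 1"
    using simplex_vertex_unit_component by blast
  moreover have "0 < 1 + \<tau>"
    using \<open>1 / real CARD('n) < \<tau>\<close> divide_nonneg_nonneg[of 1 "real CARD('n)"] by linarith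
  ultimately have "lattice_segment ((- \<tau>) *\<^sub>R simplex_vertex j) (simplex_vertex j)"
    "lattice_length ((- \<tau>) *\<^sub>R simplex_vertex j) (simplex_vertex j) = 1 + \<tau>"
    using lattice_length_primitive[OF int_vec_simplex_vertex, of j i "1 + \<tau>" "(- \<tau>) *\<^sub>R simplex_vertex j"]
    by (simp_all add: algebra_simps)
  moreover have "(real CARD('n) + 1) / real CARD('n) < 1 + \<tau>"
    using \<open>1 / real CARD('n) < \<tau>\<close> by (simp add: add_divide_distrib)
  ultimately show ?thesis
    using y by auto
qed

lemma lattice_complete_simplex_S: "lattice_complete (simplex_S :: (real^'n) set)"
  unfolding lattice_complete_def
proof (intro conjI allI impI)
  show "convex_body (simplex_S :: (real^'n) set)"
    by (rule convex_body_simplex_S)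
  fix K :: "(real^'n) set"
  assume K: "convex_body K \<and> simplex_S \<subset> K"
  then obtain p where "p \<in> K" "p \<notin> simplex_S"
    by blast
  then obtain j where "bary_coord p j < 0"
    by (auto simp: simplex_S_eq_bary_coord_nonneg not_le)
  then obtain y where "y \<in> K" "lattice_segment y (simplex_vertex j)"
    and long: "(real CARD('n) + 1) / real CARD('n) < lattice_length y (simplex_vertex j)"
    using long_lattice_segment_beyond_facet[of K p j] K \<open>p \<in> K\<close>
    unfolding convex_body_def by blast
  moreover have "simplex_vertex j \<in> K"
    using K simplex_vertex_in_simplex_S by blast
  ultimately have "lattice_length y (simplex_vertex j) \<le> lattice_diam K"
    using K unfolding convex_body_def by (intro lattice_length_le_diam) auto
  then show "lattice_diam K \<noteq> lattice_diam (simplex_S :: (real^'n) set)"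
    using long lattice_diam_simplex_S_le[where 'n='n] by linarith
qed

theorem proposition3p12:
  shows "lattice_reduced (simplex_S :: (real^'n) set) \<and> lattice_complete (simplex_S :: (real^'n) set)"
  using lattice_reduced_simplex_S lattice_complete_simplex_S by blast

end
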